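(* Let $P$ be an integer. For integers $A,B$ consider the equation $\sigma_2(n)-n^2=An+B$ in positive integers $n$. Then every solution $n$ with $n>(|A|+|B|)^3$ has the following form (so all solutions not of this form are among the finitely many $n\le(|A|+|B|)^3$, which can be computed): (1) if $P^2+4$ is square-free, $A=P^2+2$ and $B=-P^4-4P^2+1$: $n=V_{2k}(P,-1)\,V_{2k+2}(P,-1)$ for some integer $k\ge 0$, with $V_{2k}(P,-1)$ and $V_{2k+2}(P,-1)$ both prime; (2) if $P^2+4$ is square-free, $A=P^2+2$ and $B=P^4+4P^2+1$: $n=V_{2k-1}(P,-1)\,V_{2k+1}(P,-1)$ for some integer $k\ge 1$, with $V_{2k-1}(P,-1)$ and $V_{2k+1}(P,-1)$ both prime; (3) if $P^2-4$ is square-free, $A=P^2-2$ and $B=-P^4+4P^2+1$: $n=V_{k-1}(P,1)\,V_{k+1}(P,1)$ for some integer $k\ge 1$, with $V_{k-1}(P,1)$ and $V_{k+1}(P,1)$ both prime.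
   Context: For a positive integer $n$ and $k\ge 0$, $\sigma_k(n)=\sum_{d\mid n,\ d>0} d^k$. For integers $P,Q$, the Lucas sequences are defined for $j\ge 0$ by $U_0(P,Q)=0$, $U_1(P,Q)=1$, $U_j(P,Q)=P\,U_{j-1}(P,Q)-Q\,U_{j-2}(P,Q)$ for $j>1$, and $V_0(P,Q)=2$, $V_1(P,Q)=P$, $V_j(P,Q)=P\,V_{j-1}(P,Q)-Q\,V_{j-2}(P,Q)$ for $j>1$. An integer is square-free if it is not divisible by the square of any prime (in particular it is nonzero). *)

theory Defs
  imports "HOL-Computational_Algebra.Computational_Algebra"
begin

definition sigma :: "nat \<Rightarrow> nat \<Rightarrow> nat" where
  "sigma k n = (\<Sum>d \<in> {d. d dvd n \<and> d > 0}. d ^ k)"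

fun lucasV :: "int \<Rightarrow> int \<Rightarrow> nat \<Rightarrow> int" where
  "lucasV P Q 0 = 2"
| "lucasV P Q (Suc 0) = P"
| "lucasV P Q (Suc (Suc j)) = P * lucasV P Q (Suc j) - Q * lucasV P Q j"

end

(*
  For n > C^3, C = |A| + |B|, the equation forces n = p q with primes p < q and
  1 + p^2 + q^2 = A p q + B: the least prime factor p of n must exceed C, so the
  cofactor, being less than C p < p^2, is prime.  For A = P^2 - 2Q with Q = 1 or -1,
  completing the square in q turns this into the Pell-type equation
  p^2 - (P^2 - 4Q) w^2 = +-4, provided P^2 - 4Q is squarefree, with
  2q = A p + P (P^2 - 4Q) w.  The descent (x, w) |-> (V_(m-1), U_(m-1)) shows that
  the positive solutions are exactly the Lucas pairs (V_m, U_m), so p = V_m and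
  q = V_(m+2) or V_(m-2); the sign of the norm, 4 Q^m, fixes the parity of m.
*)
theory Submission
  imports Defs
begin

section \<open>Lucas sequences\<close>

fun lucasU :: "int \<Rightarrow> int \<Rightarrow> nat \<Rightarrow> int" where
  "lucasU P Q 0 = 0"
| "lucasU P Q (Suc 0) = 1"
| "lucasU P Q (Suc (Suc j)) = P * lucasU P Q (Suc j) - Q * lucasU P Q j"

lemma lucas_recurrence_zero:
  fixes f :: "nat \<Rightarrow> int"
  assumes "f 0 = 0" "f 1 = 0" "\<And>n. f (Suc (Suc n)) = P * f (Suc n) - Q * f n"
  shows "f n = 0"
  by (induction n rule: induct_nat_012) (use assms in simp_all)

lemma lucasV_Suc: "2 * lucasV P Q (Suc n) = P * lucasV P Q n + (P^2 - 4*Q) * lucasU P Q n"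
  using lucas_recurrence_zero[of "\<lambda>n. 2 * lucasV P Q (Suc n)
    - P * lucasV P Q n - (P^2 - 4*Q) * lucasU P Q n" P Q n]
  by (simp add: algebra_simps power2_eq_square)

lemma lucasU_Suc: "2 * lucasU P Q (Suc n) = P * lucasU P Q n + lucasV P Q n"
  using lucas_recurrence_zero[of "\<lambda>n. 2 * lucasU P Q (Suc n) - P * lucasU P Q n - lucasV P Q n" P Q n]
  by (simp add: algebra_simps)

lemma lucasV_Suc_Suc:
  "2 * lucasV P Q (Suc (Suc n)) = (P^2 - 2*Q) * lucasV P Q n + P * (P^2 - 4*Q) * lucasU P Q n"
  using lucas_recurrence_zero[of "\<lambda>n. 2 * lucasV P Q (Suc (Suc n))
    - (P^2 - 2*Q) * lucasV P Q n - P * (P^2 - 4*Q) * lucasU P Q n" P Q n]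
  by (simp add: algebra_simps power2_eq_square)

lemma lucasV_Suc_Suc_back:
  "(P^2 - 2*Q) * lucasV P Q (Suc (Suc n)) - P * (P^2 - 4*Q) * lucasU P Q (Suc (Suc n))
    = 2 * Q^2 * lucasV P Q n"
  using lucas_recurrence_zero[of "\<lambda>n. (P^2 - 2*Q) * lucasV P Q (Suc (Suc n))
    - P * (P^2 - 4*Q) * lucasU P Q (Suc (Suc n)) - 2 * Q^2 * lucasV P Q n" P Q n]
  by (simp add: algebra_simps power2_eq_square)

lemma lucas_norm: "lucasV P Q n ^ 2 - (P^2 - 4*Q) * lucasU P Q n ^ 2 = 4 * Q ^ n"
proof (induction n)
  case (Suc n)
  have "4 * (lucasV P Q (Suc n) ^ 2 - (P^2 - 4*Q) * lucasU P Q (Suc n) ^ 2)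
      = (2 * lucasV P Q (Suc n)) ^ 2 - (P^2 - 4*Q) * (2 * lucasU P Q (Suc n)) ^ 2"
    by (simp add: algebra_simps power2_eq_square)
  also have "\<dots> = 4 * Q * (lucasV P Q n ^ 2 - (P^2 - 4*Q) * lucasU P Q n ^ 2)"
    unfolding lucasV_Suc lucasU_Suc by (simp add: algebra_simps power2_eq_square)
  finally show ?case using Suc by simp
qed simp

lemma lucasV_uminus: "lucasV (-P) Q n = (-1)^n * lucasV P Q n"
  by (induction P Q n rule: lucasV.induct) (auto simp: algebra_simps)

lemma lucasV_abs_mult:
  assumes "even (i + j)"
  shows "lucasV \<bar>P\<bar> Q i * lucasV \<bar>P\<bar> Q j = lucasV P Q i * lucasV P Q j"
proof (cases "0 \<le> P")
  case False
  have "(-1::int) ^ i * (-1) ^ j = 1" using assms by (simp flip: power_add)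
  then show ?thesis using False lucasV_uminus[of P Q] by (simp add: algebra_simps)
qed simp

lemma abs_lucasV_abs: "\<bar>lucasV \<bar>P\<bar> Q i\<bar> = \<bar>lucasV P Q i\<bar>"
  by (cases "0 \<le> P") (simp_all add: lucasV_uminus abs_mult)

lemma lucasV_neighbour:
  fixes P Q p q w :: int
  assumes Q: "Q = 1 \<or> Q = -1" and pq: "0 < p" "p < q"
    and m: "p = lucasV P Q m" "\<bar>w\<bar> = lucasU P Q m"
    and q: "2 * q = (P^2 - 2*Q) * p + P * (P^2 - 4*Q) * w"
  shows "q = lucasV P Q (m + 2) \<or> (2 \<le> m \<and> q = lucasV P Q (m - 2))"
proof (cases "0 \<le> w")
  case True
  then have "2 * q = 2 * lucasV P Q (Suc (Suc m))" unfolding lucasV_Suc_Suc using q m by simp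
  then show ?thesis by simp
next
  case False
  then have w: "w = - lucasU P Q m" using m(2) by linarith
  have "m \<noteq> 0"
  proof
    assume "m = 0"
    then show False using False m(2) by simp
  qed
  then consider (one) "m = 1" | (ge2) "2 \<le> m" by linarith
  then show ?thesis
  proof cases
    case one
    then have "2 * q = 2 * Q * p" using q w m(1) by (simp add: algebra_simps power2_eq_square)
    then show ?thesis using Q pq by auto
  next
    case ge2
    then have "m = Suc (Suc (m - 2))" by simp
    then have "2 * q = 2 * Q^2 * lucasV P Q (m - 2)"
      using q w m(1) lucasV_Suc_Suc_back[of P Q "m - 2"] by (simp add: algebra_simps)
    then show ?thesis using Q ge2 by auto
  qed
qed

lemma lucasV_product_of_neighbours:
  fixes P Q :: int and p q :: nat
  assumes Q: "Q = 1 \<or> Q = -1" and pq: "prime p" "prime q" and m: "lucasV P Q m = int p"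
    and q: "lucasV P Q (m + 2) = int q \<or> (2 \<le> m \<and> lucasV P Q (m - 2) = int q)"
  obtains j where "int (p * q) = lucasV P Q j * lucasV P Q (j + 2)"
    "prime \<bar>lucasV P Q j\<bar>" "prime \<bar>lucasV P Q (j + 2)\<bar>" "Q ^ j = Q ^ m"
  using q
proof (elim disjE conjE)
  assume "lucasV P Q (m + 2) = int q"
  then show thesis using that[of m] m pq by simp
next
  assume "2 \<le> m" "lucasV P Q (m - 2) = int q"
  moreover from \<open>2 \<le> m\<close> have m2: "m - 2 + 2 = m" by simp
  moreover have "Q ^ m = Q ^ (m - 2) * Q^2" by (subst m2[symmetric], simp only: power_add)
  ultimately show thesis using that[of "m - 2"] m pq Q by (auto simp: mult.commute)
qed

section \<open>Pell-type equations\<close>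

lemma squarefree_dvd_square_imp_dvd:
  fixes d t :: int
  assumes sq: "squarefree d" and dvd: "d dvd t^2"
  shows "d dvd t"
proof -
  define g where "g = gcd d t"
  have g0: "g \<noteq> 0" using sq unfolding g_def by auto
  obtain d' t' where dt: "d = d' * g" "t = t' * g" "coprime d' t'"
    using gcd_coprime_exists[OF g0[unfolded g_def]] unfolding g_def by blast
  have "d' * g dvd (g * t'^2) * g" using dvd dt by (simp add: power2_eq_square algebra_simps)
  then have "d' dvd g * t'^2" using g0 by simp
  moreover have "coprime d' (t'^2)" using dt(3) by simp
  ultimately have "d' dvd g" using coprime_dvd_mult_left_iff by blast
  then have "d'^2 dvd d" using dt(1) by (simp add: power2_eq_square)
  then have "is_unit d'" using squarefreeD[OF sq] by blast
  then have "d dvd g" using dt(1) by simp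
  then show ?thesis unfolding g_def using dvd_trans gcd_dvd2 by blast
qed

lemma binary_quadratic_to_pell:
  fixes P D A p q s :: int
  assumes P: "P \<noteq> 0" and sq: "squarefree D" and AD: "A^2 - 4 = P^2 * D"
    and e: "p^2 + q^2 - A * p * q = s * P^2 * D"
  obtains w where "p^2 - D * w^2 = -4 * s" "2 * q = A * p + P * D * w"
proof -
  define u where "u = 2 * q - A * p"
  have "u^2 = (A^2 - 4) * p^2 + 4 * (p^2 + q^2 - A * p * q)"
    unfolding u_def by (simp add: algebra_simps power2_eq_square)
  also have "\<dots> = P^2 * (D * (p^2 + 4 * s))" unfolding AD e by (simp add: algebra_simps)
  finally have u2: "u^2 = P^2 * (D * (p^2 + 4 * s))" .
  then have "P dvd u" by (simp flip: pow_divides_pow_iff[of 2])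
  then obtain t where t: "u = P * t" by blast
  then have t2: "t^2 = D * (p^2 + 4 * s)" using u2 P by (simp add: power_mult_distrib)
  then have "D dvd t" using squarefree_dvd_square_imp_dvd[OF sq] by simp
  then obtain w where w: "t = D * w" by blast
  have "D * (D * w^2) = D * (p^2 + 4 * s)" using t2 w by (simp add: power2_eq_square algebra_simps)
  then have "p^2 - D * w^2 = -4 * s" using sq by auto
  moreover have "2 * q = A * p + P * D * w" using u_def t w by simp
  ultimately show thesis by (rule that)
qed

(* If (x, w) = (V_(m+1), U_(m+1)) then (x', w') = (V_m, U_m): this inverts lucasV_Suc and lucasU_Suc. *)
lemma lucas_descent_step:
  fixes P Q x w :: int
  assumes Q: "Q = 1 \<or> Q = -1" and even: "even (x^2 - (P^2 - 4*Q) * w^2)"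
  obtains x' w' where "2 * x' = Q * (P*x - (P^2 - 4*Q) * w)" "2 * w' = Q * (P*w - x)"
    "x'^2 - (P^2 - 4*Q) * w'^2 = Q * (x^2 - (P^2 - 4*Q) * w^2)"
proof -
  define D where "D = P^2 - 4*Q"
  have QQ: "Q * Q = 1" using Q by auto
  have ev_w: "even (P*w - x)" using even by simp
  have ev_x: "even (P*x - D*w)" using even unfolding D_def by simp
  define x' where "x' = Q * ((P*x - D*w) div 2)"
  define w' where "w' = Q * ((P*w - x) div 2)"
  have x': "2 * x' = Q * (P*x - D*w)" unfolding x'_def using ev_x by simp
  have w': "2 * w' = Q * (P*w - x)" unfolding w'_def using ev_w by simp
  have "4 * (x'^2 - D * w'^2) = (2*x')^2 - D * (2*w')^2" by (simp add: algebra_simps power2_eq_square)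
  also have "\<dots> = (Q*Q) * ((P*x - D*w)^2 - D * (P*w - x)^2)"
    unfolding x' w' by (simp add: algebra_simps power2_eq_square)
  also have "\<dots> = 4 * (Q * (x^2 - D * w^2))"
    unfolding QQ D_def by (simp add: algebra_simps power2_eq_square)
  finally show thesis using that x' w' unfolding D_def by simp
qed

lemma lucas_ascent_step:
  fixes P Q x w x' w' :: int
  assumes Q: "Q = 1 \<or> Q = -1"
    and x': "2 * x' = Q * (P*x - (P^2 - 4*Q) * w)" and w': "2 * w' = Q * (P*w - x)"
    and m: "x' = lucasV P Q m" "w' = lucasU P Q m"
  shows "x = lucasV P Q (Suc m) \<and> w = lucasU P Q (Suc m)"
proof -
  have QQ: "Q * Q = 1" using Q by auto
  have "4 * lucasV P Q (Suc m) = P * (2*x') + (P^2 - 4*Q) * (2*w')"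
    using lucasV_Suc[of P Q m] m by simp
  also have "\<dots> = 4 * (Q*Q) * x" unfolding x' w' by (simp add: algebra_simps power2_eq_square)
  finally have "x = lucasV P Q (Suc m)" using QQ by simp
  moreover have "4 * lucasU P Q (Suc m) = P * (2*w') + 2*x'"
    using lucasU_Suc[of P Q m] m by simp
  then have "4 * lucasU P Q (Suc m) = 4 * (Q*Q) * w" unfolding x' w' by (simp add: algebra_simps power2_eq_square)
  then have "w = lucasU P Q (Suc m)" using QQ by simp
  ultimately show ?thesis ..
qed

(* A descent step multiplies the norm by Q, so the norms 4 and 4Q alternate. *)
lemma lucas_pair_by_descent:
  fixes P Q x w :: int
  assumes Q: "Q = 1 \<or> Q = -1"
    and descent: "\<And>x w x' w'. 0 < x \<Longrightarrow> 0 < w \<Longrightarrow> x^2 - (P^2 - 4*Q) * w^2 \<in> {4, 4*Q} \<Longrightarrow>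
        2 * x' = Q * (P*x - (P^2 - 4*Q) * w) \<Longrightarrow> 2 * w' = Q * (P*w - x) \<Longrightarrow>
        (\<exists>m. x = lucasV P Q m \<and> w = lucasU P Q m) \<or> (0 < x' \<and> 0 \<le> w' \<and> w' < w)"
    and sol: "0 < x" "0 \<le> w" "x^2 - (P^2 - 4*Q) * w^2 \<in> {4, 4*Q}"
  shows "\<exists>m. x = lucasV P Q m \<and> w = lucasU P Q m"
  using sol
proof (induction "nat w" arbitrary: x w rule: less_induct)
  case less
  show ?case
  proof (cases "w = 0")
    case True
    then have "x^2 = 4 \<or> x^2 = -4" using less.prems Q by auto
    then have "x^2 = 2^2" using zero_le_power2[of x] by auto
    then have "x = 2" using \<open>0 < x\<close> power2_eq_iff[of x 2] by auto
    then show ?thesis using True by (intro exI[of _ 0]) simp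
  next
    case False
    have "x^2 - (P^2 - 4*Q) * w^2 \<in> {2 * 2, 2 * (2*Q)}" using less.prems(3) by simp
    then have "even (x^2 - (P^2 - 4*Q) * w^2)" by (auto simp only: insert_iff empty_iff dvd_triv_left)
    then obtain x' w' where x': "2 * x' = Q * (P*x - (P^2 - 4*Q) * w)" and w': "2 * w' = Q * (P*w - x)"
      and norm: "x'^2 - (P^2 - 4*Q) * w'^2 = Q * (x^2 - (P^2 - 4*Q) * w^2)"
      by (rule lucas_descent_step[OF Q])
    from descent[OF \<open>0 < x\<close> _ less.prems(3) x' w'] False less.prems(2)
    consider "\<exists>m. x = lucasV P Q m \<and> w = lucasU P Q m" | "0 < x'" "0 \<le> w'" "w' < w"
      by fastforce
    then show ?thesis
    proof cases
      case 2
      have "x'^2 - (P^2 - 4*Q) * w'^2 \<in> {4, 4*Q}" using norm less.prems(3) Q by auto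
      then obtain m where "x' = lucasV P Q m" "w' = lucasU P Q m"
        using less.hyps[of w' x'] 2 by auto
      then show ?thesis using lucas_ascent_step[OF Q x' w'] by blast
    qed
  qed
qed

(* The exception is (V_2, U_2) = (3, 1) for P = 1, which descends to (V_1, U_1) = (1, 1). *)
lemma pell_minus_descent_bounds:
  fixes P x w x' w' :: int
  assumes P: "P \<ge> 1" and x: "0 < x" and w: "0 < w"
    and norm: "x^2 - (P^2 + 4) * w^2 \<in> {4, -4}"
    and x': "2 * x' = (P^2 + 4) * w - P * x" and w': "2 * w' = x - P * w"
  shows "(0 < x' \<and> 0 \<le> w' \<and> w' < w) \<or> (P = 1 \<and> x = 3 \<and> w = 1)"
proof (rule disjCI)
  assume exc: "\<not> (P = 1 \<and> x = 3 \<and> w = 1)"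
  have ww: "w^2 \<ge> 1" using w by (simp add: one_le_power)
  have norm_le: "x^2 \<le> (P^2 + 4) * w^2 + 4" and norm_ge: "x^2 \<ge> P^2 * w^2"
    using norm ww by (auto simp: algebra_simps)
  have "P * w \<le> x"
    using norm_ge x by (metis abs_le_square_iff abs_of_pos power_mult_distrib abs_ge_self order_trans)
  then have w'0: "0 \<le> w'" using w' by simp
  have "w' < w"
  proof (rule ccontr)
    assume "\<not> w' < w"
    then have "(P + 2) * w \<le> x" using w' by (simp add: algebra_simps)
    then have "((P + 2) * w)^2 \<le> x^2" using P w by (intro power_mono) auto
    then have "4 * (P * w^2) \<le> 4" using norm_le by (simp add: algebra_simps power2_eq_square)
    moreover have "P * 1 \<le> P * w^2" using ww P by (intro mult_left_mono) auto
    moreover have "1 * w^2 \<le> P * w^2" using P by (intro mult_right_mono) auto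
    ultimately have "P = 1" "w^2 = 1" using P ww by linarith+
    then have "w = 1" using w by (simp add: power2_eq_1_iff)
    then have "x^2 \<le> 3^2" "3 \<le> x" using norm_le \<open>(P + 2) * w \<le> x\<close> \<open>P = 1\<close> by auto
    then have "x = 3" using power2_le_imp_le[of x 3] by simp
    then show False using exc \<open>P = 1\<close> \<open>w = 1\<close> by simp
  qed
  moreover have "0 < x'"
  proof (rule ccontr)
    assume "\<not> 0 < x'"
    then have "(P^2 + 4) * w \<le> P * x" using x' by simp
    then have "((P^2 + 4) * w)^2 \<le> (P * x)^2" using w by (intro power_mono) auto
    also have "\<dots> \<le> P^2 * ((P^2 + 4) * w^2 + 4)"
      using norm_le by (simp add: power_mult_distrib mult_left_mono)
    finally have "(P^2 + 4) * w^2 \<le> P^2" by (simp add: algebra_simps power2_eq_square)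
    moreover have "(P^2 + 4) * 1 \<le> (P^2 + 4) * w^2" using ww by (intro mult_left_mono) auto
    ultimately show False by simp
  qed
  ultimately show "0 < x' \<and> 0 \<le> w' \<and> w' < w" using w'0 by simp
qed

lemma pell_plus_descent_bounds:
  fixes P x w x' w' :: int
  assumes P: "P \<ge> 3" and x: "0 < x" and w: "0 < w"
    and norm: "x^2 - (P^2 - 4) * w^2 = 4"
    and x': "2 * x' = P * x - (P^2 - 4) * w" and w': "2 * w' = P * w - x"
  shows "0 < x' \<and> 0 \<le> w' \<and> w' < w"
proof (intro conjI)
  have ww: "w^2 \<ge> 1" using w by (simp add: one_le_power)
  have "x^2 \<le> (P * w)^2" using norm ww by (simp add: algebra_simps power2_eq_square)
  moreover have "0 \<le> P * w" using P w by simp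
  ultimately have "x \<le> P * w" by (rule power2_le_imp_le)
  then show "0 \<le> w'" using w' by simp
  show "w' < w"
  proof (rule ccontr)
    assume "\<not> w' < w"
    then have "x \<le> (P - 2) * w" using w' by (simp add: algebra_simps)
    then have "x^2 \<le> ((P - 2) * w)^2" using x by (simp add: power_mono)
    then have "P * w^2 + 1 \<le> 2 * w^2" using norm by (simp add: algebra_simps power2_eq_square)
    moreover have "3 * w^2 \<le> P * w^2" using P by (intro mult_right_mono) auto
    ultimately show False using ww by linarith
  qed
  show "0 < x'"
  proof (rule ccontr)
    assume "\<not> 0 < x'"
    then have "P * x \<le> (P^2 - 4) * w" using x' by simp
    moreover have "0 \<le> P * x" using P x by simp
    ultimately have "(P * x)^2 \<le> ((P^2 - 4) * w)^2" by (simp add: power_mono)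
    also have "(P * x)^2 = P^2 * ((P^2 - 4) * w^2 + 4)" using norm by (simp add: power_mult_distrib)
    finally have "P^2 * ((P^2 - 4) * w^2 + 4) \<le> (P^2 - 4) * ((P^2 - 4) * w^2)"
      by (simp add: power2_eq_square mult_ac)
    then have "(P^2 - 4) * w^2 + P^2 \<le> 0" by (simp add: algebra_simps)
    moreover have "3 * 3 \<le> P * P" using P by (intro mult_mono) auto
    then have "0 \<le> (P^2 - 4) * w^2" by (simp add: power2_eq_square)
    moreover have "0 < P^2" using P by simp
    ultimately show False by linarith
  qed
qed

lemma lucas_pair_of_pell_minus:
  fixes P x w :: int
  assumes P: "P \<ge> 1" and "0 < x" "0 \<le> w" "x^2 - (P^2 + 4) * w^2 \<in> {4, -4}"
  shows "\<exists>m. x = lucasV P (-1) m \<and> w = lucasU P (-1) m"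
proof (rule lucas_pair_by_descent)
  fix x w x' w' :: int
  assume x: "0 < x" and w: "0 < w" and norm: "x^2 - (P^2 - 4 * -1) * w^2 \<in> {4, 4 * -1}"
    and x': "2 * x' = -1 * (P * x - (P^2 - 4 * -1) * w)" and w': "2 * w' = -1 * (P * w - x)"
  have "(0 < x' \<and> 0 \<le> w' \<and> w' < w) \<or> (P = 1 \<and> x = 3 \<and> w = 1)"
    using norm x' w' by (intro pell_minus_descent_bounds[OF P x w]) simp_all
  moreover have "P = 1 \<and> x = 3 \<and> w = 1 \<Longrightarrow> x = lucasV P (-1) 2 \<and> w = lucasU P (-1) 2"
    by (simp add: numeral_eq_Suc)
  ultimately show "(\<exists>m. x = lucasV P (-1) m \<and> w = lucasU P (-1) m) \<or> (0 < x' \<and> 0 \<le> w' \<and> w' < w)"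
    by blast
qed (use assms in simp_all)

lemma lucas_pair_of_pell_plus:
  fixes P x w :: int
  assumes P: "P \<ge> 3" and "0 < x" "0 \<le> w" "x^2 - (P^2 - 4) * w^2 = 4"
  shows "\<exists>m. x = lucasV P 1 m \<and> w = lucasU P 1 m"
proof (rule lucas_pair_by_descent)
  fix x w x' w' :: int
  assume x: "0 < x" and w: "0 < w" and norm: "x^2 - (P^2 - 4 * 1) * w^2 \<in> {4, 4 * 1}"
    and x': "2 * x' = 1 * (P * x - (P^2 - 4 * 1) * w)" and w': "2 * w' = 1 * (P * w - x)"
  have "0 < x' \<and> 0 \<le> w' \<and> w' < w"
    using norm x' w' by (intro pell_plus_descent_bounds[OF P x w]) simp_all
  then show "(\<exists>m. x = lucasV P 1 m \<and> w = lucasU P 1 m) \<or> (0 < x' \<and> 0 \<le> w' \<and> w' < w)" ..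
qed (use assms in simp_all)

section \<open>Sums of powers of divisors\<close>

lemma divisors_prime_mult:
  assumes "prime (p::nat)" "prime q"
  shows "{d. d dvd p * q \<and> d > 0} = {1, p, q, p * q}"
proof
  show "{d. d dvd p * q \<and> d > 0} \<subseteq> {1, p, q, p * q}"
  proof
    fix d assume "d \<in> {d. d dvd p * q \<and> d > 0}"
    then have "d dvd p * q" by simp
    then obtain a b where "d = a * b" "a dvd p" "b dvd q" using division_decomp by blast
    moreover have "a = 1 \<or> a = p" "b = 1 \<or> b = q"
      using \<open>a dvd p\<close> \<open>b dvd q\<close> assms by (auto simp: prime_nat_iff)
    ultimately show "d \<in> {1, p, q, p * q}" by auto
  qed
qed (use assms prime_gt_0_nat in auto)

lemma sigma_prime:
  assumes "prime p" shows "sigma k p = 1 + p ^ k"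
proof -
  have "{d. d dvd p \<and> d > 0} = {1, p}" using assms by (auto simp: prime_nat_iff)
  then show ?thesis using prime_gt_1_nat[OF assms] unfolding sigma_def by simp
qed

lemma sigma_prime_square:
  assumes "prime p" shows "sigma k (p * p) = 1 + p ^ k + (p * p) ^ k"
proof -
  have "p > 1" using assms prime_gt_1_nat by blast
  then have "p * p \<noteq> 1" "p * p \<noteq> p" "p \<noteq> 1" by auto
  then show ?thesis unfolding sigma_def divisors_prime_mult[OF assms assms] by simp
qed

lemma sigma_prime_mult:
  assumes "prime p" "prime q" "p \<noteq> q"
  shows "sigma k (p * q) = 1 + p ^ k + q ^ k + (p * q) ^ k"
proof -
  have "p > 1" "q > 1" using assms prime_gt_1_nat by blast+
  then have "p * q \<noteq> 1" "p * q \<noteq> p" "p * q \<noteq> q" "p \<noteq> 1" "q \<noteq> 1" by auto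
  then show ?thesis unfolding sigma_def divisors_prime_mult[OF assms(1,2)] using assms(3) by simp
qed

lemma finite_divisors_pos: "0 < n \<Longrightarrow> finite {d. d dvd n \<and> d > (0::nat)}"
  by (rule finite_subset[of _ "{..n}"]) (auto dest: dvd_imp_le)

lemma sigma_ge_power: "0 < n \<Longrightarrow> n ^ k \<le> sigma k n"
  unfolding sigma_def by (rule member_le_sum) (auto simp: finite_divisors_pos)

lemma sigma_ge_divisor:
  assumes "m dvd n" "1 < m" "m < n"
  shows "1 + m ^ k + n ^ k \<le> sigma k n"
proof -
  have "1 + m ^ k + n ^ k = (\<Sum>d\<in>{1, m, n}. d ^ k)" using assms by simp
  also have "\<dots> \<le> sigma k n"
    unfolding sigma_def using assms by (intro sum_mono2 finite_divisors_pos) auto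
  finally show ?thesis .
qed

section \<open>Large solutions\<close>

lemma obtain_least_prime_factor:
  fixes n :: nat
  assumes "1 < n"
  obtains p where "prime p" "p dvd n" "\<And>r. 1 < r \<Longrightarrow> r dvd n \<Longrightarrow> p \<le> r"
proof
  define p where "p = (LEAST d. 1 < d \<and> d dvd n)"
  have p: "1 < p" "p dvd n" unfolding p_def by (rule LeastI2[of _ n]; use assms in auto)+
  show least: "\<And>r. 1 < r \<Longrightarrow> r dvd n \<Longrightarrow> p \<le> r" unfolding p_def by (rule Least_le) simp
  show "p dvd n" by (fact p(2))
  show "prime p"
    unfolding prime_nat_iff
  proof (intro conjI allI impI)
    fix r assume "r dvd p"
    then have "r \<le> p" "r dvd n" "r \<noteq> 0" using p dvd_imp_le dvd_trans by (auto intro: Nat.gr0I)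
    then show "r = 1 \<or> r = p" using least[of r] by (cases "r = 1") auto
  qed (fact p(1))
qed

lemma prime_if_no_small_factor:
  fixes m p :: nat
  assumes "1 < m" "m < p * p" and least: "\<And>r. 1 < r \<Longrightarrow> r dvd m \<Longrightarrow> p \<le> r"
  shows "prime m"
  unfolding prime_nat_iff
proof (intro conjI allI impI)
  fix r assume "r dvd m"
  then obtain s where s: "m = r * s" by blast
  show "r = 1 \<or> r = m"
  proof (rule ccontr)
    assume "\<not> (r = 1 \<or> r = m)"
    then have "1 < r" "1 < s" using s assms(1) by (auto simp: nat_neq_iff)
    then have "p * p \<le> r * s" using least s by (intro mult_mono) auto
    then show False using s assms(2) by simp
  qed
qed (fact assms(1))

lemma sigma2_eq_prime_bound:
  assumes "prime n" "A \<noteq> 0" and eq: "int (sigma 2 n) - int n ^ 2 = A * int n + B"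
  shows "int n \<le> 1 + \<bar>B\<bar>"
proof -
  have "A * int n = 1 - B" using eq sigma_prime[OF assms(1)] by simp
  then have "\<bar>A\<bar> * int n = \<bar>1 - B\<bar>" by (metis abs_mult abs_of_nat)
  moreover have "1 * int n \<le> \<bar>A\<bar> * int n" using assms(2) by (intro mult_right_mono) auto
  ultimately show ?thesis by linarith
qed

lemma sigma2_eq_prime_square_bound:
  assumes "prime p" "n = p * p" "A \<noteq> 1" and eq: "int (sigma 2 n) - int n ^ 2 = A * int n + B"
  shows "int p ^ 2 \<le> 1 + \<bar>B\<bar>"
proof -
  have "(1 - A) * int p ^ 2 = B - 1"
    using eq sigma_prime_square[OF assms(1)] assms(2) by (simp add: algebra_simps power2_eq_square)
  then have "\<bar>1 - A\<bar> * int p ^ 2 = \<bar>B - 1\<bar>" by (metis abs_mult power_abs abs_of_nat)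
  moreover have "1 * int p ^ 2 \<le> \<bar>1 - A\<bar> * int p ^ 2" using assms(3) by (intro mult_right_mono) auto
  ultimately show ?thesis by linarith
qed

lemma sigma2_eq_divisor_bound:
  assumes "m dvd n" "1 < m" "m < n" and eq: "int (sigma 2 n) - int n ^ 2 = A * int n + B"
  shows "int m ^ 2 < (\<bar>A\<bar> + \<bar>B\<bar>) * int n"
proof -
  have "int (1 + m ^ 2 + n ^ 2) \<le> int (sigma 2 n)"
    using sigma_ge_divisor[OF assms(1-3)] by (simp only: of_nat_le_iff)
  then have "1 + int m ^ 2 + int n ^ 2 \<le> int (sigma 2 n)" by simp
  then have "1 + int m ^ 2 \<le> A * int n + B" using eq by linarith
  also have "\<dots> \<le> \<bar>A\<bar> * int n + \<bar>B\<bar> * int n"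
  proof -
    have "\<bar>B\<bar> * 1 \<le> \<bar>B\<bar> * int n" using assms(3) by (intro mult_left_mono) auto
    then show ?thesis by (smt (verit) abs_ge_self mult_right_mono of_nat_0_le_iff)
  qed
  finally show ?thesis by (simp add: algebra_simps)
qed

lemma large_product_factor_bound:
  fixes C :: int and p m :: nat
  assumes "0 < C" "int m < C * int p" "C ^ 3 < int (p * m)"
  shows "C < int p"
proof (rule ccontr)
  assume "\<not> C < int p"
  then have "int (p * m) \<le> C * int m" by (simp add: mult_right_mono)
  also have "\<dots> < C * (C * int p)" using assms(2,1) by (rule mult_strict_left_mono)
  also have "\<dots> \<le> C * (C * C)" using \<open>\<not> C < int p\<close> assms(1) by (simp add: mult_left_mono)
  finally show False using assms(3) by (simp add: power3_eq_cube)
qed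

lemma sigma2_eq_large_solution_semiprime:
  fixes A B :: int and n :: nat
  assumes A: "A \<noteq> 0" "A \<noteq> 1"
    and eq: "int (sigma 2 n) - int n ^ 2 = A * int n + B"
    and big: "int n > (\<bar>A\<bar> + \<bar>B\<bar>) ^ 3"
  obtains p q where "prime p" "prime q" "p < q" "n = p * q"
    "1 + int p ^ 2 + int q ^ 2 = A * int p * int q + B"
proof -
  define C where "C = \<bar>A\<bar> + \<bar>B\<bar>"
  have C: "1 + \<bar>B\<bar> \<le> C" "0 < C" using A(1) unfolding C_def by linarith+
  have "C ^ 1 \<le> C ^ 3" using C by (intro power_increasing) auto
  then have C3: "C < int n" using big unfolding C_def by simp
  then have "1 < n" using C by linarith
  then obtain p where p: "prime p" "p dvd n" and least: "\<And>r. 1 < r \<Longrightarrow> r dvd n \<Longrightarrow> p \<le> r"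
    using obtain_least_prime_factor by blast
  define m where "m = n div p"
  have n: "n = p * m" using p(2) unfolding m_def by simp
  have "m \<noteq> 1"
  proof
    assume "m = 1"
    then have "int n \<le> 1 + \<bar>B\<bar>" using sigma2_eq_prime_bound[OF _ A(1) eq] p(1) n by simp
    then show False using C C3 by linarith
  qed
  moreover have "m \<noteq> 0" using \<open>1 < n\<close> n by (metis mult_0_right not_one_less_zero)
  ultimately have m: "m dvd n" "1 < m" "m < n" using n prime_gt_1_nat[OF p(1)] by auto
  have "int m * int m < (C * int p) * int m"
    using sigma2_eq_divisor_bound[OF m eq] n unfolding C_def by (simp add: power2_eq_square ac_simps)
  then have mC: "int m < C * int p" by (simp add: mult_less_cancel_right)
  have pC: "C < int p" using large_product_factor_bound[OF C(2) mC] big n unfolding C_def by simp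
  have "C * int p < int p * int p" using pC prime_gt_0_nat[OF p(1)] by (simp add: mult_strict_right_mono)
  then have "int m < int p * int p" using mC by linarith
  then have q: "prime m"
    using m least dvd_trans by (intro prime_if_no_small_factor[of m p]) (auto simp flip: of_nat_mult)
  have "m \<noteq> p"
  proof
    assume "m = p"
    then have "int p ^ 2 \<le> C" using sigma2_eq_prime_square_bound[OF p(1) _ A(2) eq] n C by simp
    moreover have "int p * 1 \<le> int p ^ 2"
      using prime_gt_0_nat[OF p(1)] unfolding power2_eq_square by (intro mult_left_mono) auto
    ultimately show False using pC by simp
  qed
  then have "p < m" using least[OF m(2,1)] by simp
  moreover have "1 + int p ^ 2 + int m ^ 2 = A * int p * int m + B"
    using eq sigma_prime_mult[OF p(1) q \<open>m \<noteq> p\<close>[symmetric]] n by (simp add: algebra_simps)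
  ultimately show thesis using that p(1) q n by blast
qed

lemma sigma2_eq_large_solution_coeff_nonneg:
  fixes A B :: int and n :: nat
  assumes eq: "int (sigma 2 n) - int n ^ 2 = A * int n + B"
    and big: "int n > (\<bar>A\<bar> + \<bar>B\<bar>) ^ 3"
  shows "0 \<le> A"
proof (rule ccontr)
  assume "\<not> 0 \<le> A"
  then have "1 \<le> \<bar>A\<bar> + \<bar>B\<bar>" by linarith
  then have "(\<bar>A\<bar> + \<bar>B\<bar>) ^ 1 \<le> (\<bar>A\<bar> + \<bar>B\<bar>) ^ 3" by (intro power_increasing) auto
  then have "1 + \<bar>B\<bar> < int n" using big \<open>\<not> 0 \<le> A\<close> by simp
  moreover have "A * int n \<le> (-1) * int n" using \<open>\<not> 0 \<le> A\<close> by (intro mult_right_mono) auto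
  moreover have "int n ^ 2 \<le> int (sigma 2 n)"
  proof -
    have "0 < n" using \<open>1 + \<bar>B\<bar> < int n\<close> by linarith
    then have "int (n ^ 2) \<le> int (sigma 2 n)" using sigma_ge_power by (simp only: of_nat_le_iff)
    then show ?thesis by simp
  qed
  ultimately show False using eq by linarith
qed

(* \<epsilon> is the sign of the Pell equation solved by the smaller prime factor p = V_m; by lucas_norm it
   equals Q^m, which fixes the parity of m when Q = -1. *)
lemma lucasV_product_of_sigma2_solution:
  fixes P Q \<epsilon> A B :: int and n :: nat
  assumes Q: "Q = 1 \<or> Q = -1" and P: "1 \<le> P" and sqf: "squarefree (P^2 - 4*Q)"
    and A: "A = P^2 - 2*Q" and B: "B = 1 - \<epsilon> * P^2 * (P^2 - 4*Q)"
    and pell: "\<And>x w. 0 < x \<Longrightarrow> 0 \<le> w \<Longrightarrow> x^2 - (P^2 - 4*Q) * w^2 = 4 * \<epsilon> \<Longrightarrow>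
      \<exists>m. x = lucasV P Q m \<and> w = lucasU P Q m"
    and eq: "int (sigma 2 n) - int n ^ 2 = A * int n + B"
    and big: "int n > (\<bar>A\<bar> + \<bar>B\<bar>) ^ 3"
  obtains j where "int n = lucasV P Q j * lucasV P Q (j + 2)"
    "prime \<bar>lucasV P Q j\<bar>" "prime \<bar>lucasV P Q (j + 2)\<bar>" "Q ^ j = \<epsilon>"
proof -
  define D where "D = P^2 - 4*Q"
  have "A \<noteq> 0 \<and> A \<noteq> 1"
  proof (cases "P = 1")
    case False
    then have "2 * 2 \<le> P * P" using P by (intro mult_mono) auto
    then show ?thesis using A Q by (auto simp: power2_eq_square)
  qed (use A Q in auto)
  then obtain p q where pq: "prime p" "prime q" "p < q" "n = p * q"
    and pq_eq: "1 + int p ^ 2 + int q ^ 2 = A * int p * int q + B"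
    using sigma2_eq_large_solution_semiprime eq big by metis
  have AD: "A^2 - 4 = P^2 * D" using Q unfolding A D_def by (auto simp: algebra_simps power2_eq_square)
  have "int p ^ 2 + int q ^ 2 - A * int p * int q = (- \<epsilon>) * P^2 * D"
    using pq_eq unfolding B D_def by simp
  moreover have "P \<noteq> 0" using P by simp
  ultimately obtain w where w: "int p ^ 2 - D * w^2 = -4 * (- \<epsilon>)" "2 * int q = A * int p + P * D * w"
    using binary_quadratic_to_pell[OF _ sqf[folded D_def] AD] by blast
  obtain m where m: "int p = lucasV P Q m" "\<bar>w\<bar> = lucasU P Q m"
    using pell[of "int p" "\<bar>w\<bar>"] w(1) prime_gt_0_nat[OF pq(1)] unfolding D_def by simp blast
  have "lucasU P Q m ^ 2 = w^2" using power2_abs[of w] m(2) by simp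
  then have "4 * Q ^ m = 4 * \<epsilon>" using lucas_norm[of P Q m] w(1) m(1) unfolding D_def by simp
  then have Qm: "Q ^ m = \<epsilon>" by simp
  have "lucasV P Q (m + 2) = int q \<or> (2 \<le> m \<and> lucasV P Q (m - 2) = int q)"
    using lucasV_neighbour[OF Q _ _ m] w(2) pq(3) prime_gt_0_nat[OF pq(1)] unfolding A D_def by auto
  then obtain j where "int (p * q) = lucasV P Q j * lucasV P Q (j + 2)"
    "prime \<bar>lucasV P Q j\<bar>" "prime \<bar>lucasV P Q (j + 2)\<bar>" "Q ^ j = Q ^ m"
    using lucasV_product_of_neighbours[OF Q pq(1,2) m(1)[symmetric]] by blast
  then show thesis using that pq(4) Qm by simp
qed

lemma lucasV_product_of_sigma2_solution_sign:
  fixes P Q \<epsilon> A B :: int and n :: nat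
  assumes Q: "Q = 1 \<or> Q = -1" and P: "P \<noteq> 0" and sqf: "squarefree (P^2 - 4*Q)"
    and A: "A = P^2 - 2*Q" and B: "B = 1 - \<epsilon> * P^2 * (P^2 - 4*Q)"
    and pell: "\<And>x w. 0 < x \<Longrightarrow> 0 \<le> w \<Longrightarrow> x^2 - (P^2 - 4*Q) * w^2 = 4 * \<epsilon> \<Longrightarrow>
      \<exists>m. x = lucasV \<bar>P\<bar> Q m \<and> w = lucasU \<bar>P\<bar> Q m"
    and eq: "int (sigma 2 n) - int n ^ 2 = A * int n + B"
    and big: "int n > (\<bar>A\<bar> + \<bar>B\<bar>) ^ 3"
  obtains j where "int n = lucasV P Q j * lucasV P Q (j + 2)"
    "prime \<bar>lucasV P Q j\<bar>" "prime \<bar>lucasV P Q (j + 2)\<bar>" "Q ^ j = \<epsilon>"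
proof -
  obtain j where "int n = lucasV \<bar>P\<bar> Q j * lucasV \<bar>P\<bar> Q (j + 2)"
    "prime \<bar>lucasV \<bar>P\<bar> Q j\<bar>" "prime \<bar>lucasV \<bar>P\<bar> Q (j + 2)\<bar>" "Q ^ j = \<epsilon>"
  proof (rule lucasV_product_of_sigma2_solution[OF Q _ _ _ _ _ eq big])
    show "1 \<le> \<bar>P\<bar>" using P by linarith
    show "squarefree (\<bar>P\<bar>^2 - 4*Q)" "A = \<bar>P\<bar>^2 - 2*Q" "B = 1 - \<epsilon> * \<bar>P\<bar>^2 * (\<bar>P\<bar>^2 - 4*Q)"
      using sqf A B by simp_all
    show "\<And>x w. 0 < x \<Longrightarrow> 0 \<le> w \<Longrightarrow> x^2 - (\<bar>P\<bar>^2 - 4*Q) * w^2 = 4 * \<epsilon> \<Longrightarrow>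
      \<exists>m. x = lucasV \<bar>P\<bar> Q m \<and> w = lucasU \<bar>P\<bar> Q m" using pell by simp
  qed
  moreover have "even (j + (j + 2))" by simp
  ultimately show thesis using that[of j] by (simp only: lucasV_abs_mult abs_lucasV_abs)
qed

lemma not_squarefree_4: "\<not> squarefree (4::int)"
  by (rule not_squarefreeI[of 2]) auto

lemma sigma2_solution_lucasV_even:
  fixes P A B :: int and n :: nat
  assumes sqf: "squarefree (P^2 + 4)" and A: "A = P^2 + 2" and B: "B = -(P^4) - 4 * P^2 + 1"
    and eq: "int (sigma 2 n) - int n ^ 2 = A * int n + B"
    and big: "int n > (\<bar>A\<bar> + \<bar>B\<bar>) ^ 3"
  shows "\<exists>k. int n = lucasV P (-1) (2*k) * lucasV P (-1) (2*k+2) \<and>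
    prime \<bar>lucasV P (-1) (2*k)\<bar> \<and> prime \<bar>lucasV P (-1) (2*k+2)\<bar>"
proof -
  have "P \<noteq> 0" using sqf not_squarefree_4 by auto
  obtain j where j: "int n = lucasV P (-1) j * lucasV P (-1) (j + 2)"
    "prime \<bar>lucasV P (-1) j\<bar>" "prime \<bar>lucasV P (-1) (j + 2)\<bar>" "(-1) ^ j = (1::int)"
  proof (rule lucasV_product_of_sigma2_solution_sign[OF _ \<open>P \<noteq> 0\<close> _ _ _ _ eq big])
    show "squarefree (P^2 - 4 * -1)" "A = P^2 - 2 * -1" "B = 1 - 1 * P^2 * (P^2 - 4 * -1)"
      using sqf A B by (simp_all add: algebra_simps power4_eq_xxxx power2_eq_square)
    show "\<exists>m. x = lucasV \<bar>P\<bar> (-1) m \<and> w = lucasU \<bar>P\<bar> (-1) m"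
      if "0 < x" "0 \<le> w" "x^2 - (P^2 - 4 * -1) * w^2 = 4 * 1" for x w
      using lucas_pair_of_pell_minus[of "\<bar>P\<bar>" x w] that \<open>P \<noteq> 0\<close> by simp
  qed simp
  then obtain k where "j = 2 * k" by (metis evenE neg_one_odd_power one_neq_neg_one)
  then show ?thesis using j by auto
qed

lemma sigma2_solution_lucasV_odd:
  fixes P A B :: int and n :: nat
  assumes sqf: "squarefree (P^2 + 4)" and A: "A = P^2 + 2" and B: "B = P^4 + 4 * P^2 + 1"
    and eq: "int (sigma 2 n) - int n ^ 2 = A * int n + B"
    and big: "int n > (\<bar>A\<bar> + \<bar>B\<bar>) ^ 3"
  shows "\<exists>k. k \<ge> 1 \<and> int n = lucasV P (-1) (2*k-1) * lucasV P (-1) (2*k+1) \<and>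
    prime \<bar>lucasV P (-1) (2*k-1)\<bar> \<and> prime \<bar>lucasV P (-1) (2*k+1)\<bar>"
proof -
  have "P \<noteq> 0" using sqf not_squarefree_4 by auto
  obtain j where j: "int n = lucasV P (-1) j * lucasV P (-1) (j + 2)"
    "prime \<bar>lucasV P (-1) j\<bar>" "prime \<bar>lucasV P (-1) (j + 2)\<bar>" "(-1) ^ j = (-1::int)"
  proof (rule lucasV_product_of_sigma2_solution_sign[OF _ \<open>P \<noteq> 0\<close> _ _ _ _ eq big])
    show "squarefree (P^2 - 4 * -1)" "A = P^2 - 2 * -1" "B = 1 - (-1) * P^2 * (P^2 - 4 * -1)"
      using sqf A B by (simp_all add: algebra_simps power4_eq_xxxx power2_eq_square)
    show "\<exists>m. x = lucasV \<bar>P\<bar> (-1) m \<and> w = lucasU \<bar>P\<bar> (-1) m"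
      if "0 < x" "0 \<le> w" "x^2 - (P^2 - 4 * -1) * w^2 = 4 * -1" for x w
      using lucas_pair_of_pell_minus[of "\<bar>P\<bar>" x w] that \<open>P \<noteq> 0\<close> by simp
  qed simp
  then obtain k where "j = 2 * k + 1" by (metis oddE neg_one_even_power one_neq_neg_one)
  then show ?thesis using j by (intro exI[of _ "k + 1"]) auto
qed

lemma sigma2_solution_lucasV_plus:
  fixes P A B :: int and n :: nat
  assumes sqf: "squarefree (P^2 - 4)" and A: "A = P^2 - 2" and B: "B = -(P^4) + 4 * P^2 + 1"
    and eq: "int (sigma 2 n) - int n ^ 2 = A * int n + B"
    and big: "int n > (\<bar>A\<bar> + \<bar>B\<bar>) ^ 3"
  shows "\<exists>k. k \<ge> 1 \<and> int n = lucasV P 1 (k-1) * lucasV P 1 (k+1) \<and>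
    prime \<bar>lucasV P 1 (k-1)\<bar> \<and> prime \<bar>lucasV P 1 (k+1)\<bar>"
proof -
  have "3 \<le> \<bar>P\<bar>"
  proof (rule ccontr)
    assume "\<not> 3 \<le> \<bar>P\<bar>"
    then have "P \<in> {-2, -1, 0, 1, 2}" by auto
    moreover have "P^2 \<noteq> 0" "P^2 \<noteq> 4" using sqf not_squarefree_4 by auto
    moreover have "P^2 \<noteq> 1" using sigma2_eq_large_solution_coeff_nonneg[OF eq big] A by auto
    ultimately show False by auto
  qed
  obtain j where j: "int n = lucasV P 1 j * lucasV P 1 (j + 2)"
    "prime \<bar>lucasV P 1 j\<bar>" "prime \<bar>lucasV P 1 (j + 2)\<bar>"
  proof (rule lucasV_product_of_sigma2_solution_sign[OF _ _ _ _ _ _ eq big])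
    show "squarefree (P^2 - 4 * 1)" "A = P^2 - 2 * 1" "B = 1 - 1 * P^2 * (P^2 - 4 * 1)"
      using sqf A B by (simp_all add: algebra_simps power4_eq_xxxx power2_eq_square)
    show "\<exists>m. x = lucasV \<bar>P\<bar> 1 m \<and> w = lucasU \<bar>P\<bar> 1 m"
      if "0 < x" "0 \<le> w" "x^2 - (P^2 - 4 * 1) * w^2 = 4 * 1" for x w
      using lucas_pair_of_pell_plus[of "\<bar>P\<bar>" x w] that \<open>3 \<le> \<bar>P\<bar>\<close> by simp
  qed (use \<open>3 \<le> \<bar>P\<bar>\<close> in auto)
  then show ?thesis by (intro exI[of _ "j + 1"]) auto
qed

theorem theorem1p2:
  fixes P A B :: int and n :: nat
  assumes npos: "n > 0"
    and eq: "int (sigma 2 n) - int n ^ 2 = A * int n + B"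
    and big: "int n > (\<bar>A\<bar> + \<bar>B\<bar>) ^ 3"
  shows
    "(squarefree (P^2 + 4) \<and> A = P^2 + 2 \<and> B = -(P^4) - 4 * P^2 + 1 \<longrightarrow>
       (\<exists>k::nat. int n = lucasV P (-1) (2*k) * lucasV P (-1) (2*k+2) \<and>
          prime \<bar>lucasV P (-1) (2*k)\<bar> \<and> prime \<bar>lucasV P (-1) (2*k+2)\<bar>))
   \<and> (squarefree (P^2 + 4) \<and> A = P^2 + 2 \<and> B = P^4 + 4 * P^2 + 1 \<longrightarrow>
       (\<exists>k::nat. k \<ge> 1 \<and> int n = lucasV P (-1) (2*k-1) * lucasV P (-1) (2*k+1) \<and>
          prime \<bar>lucasV P (-1) (2*k-1)\<bar> \<and> prime \<bar>lucasV P (-1) (2*k+1)\<bar>))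
   \<and> (squarefree (P^2 - 4) \<and> A = P^2 - 2 \<and> B = -(P^4) + 4 * P^2 + 1 \<longrightarrow>
       (\<exists>k::nat. k \<ge> 1 \<and> int n = lucasV P 1 (k-1) * lucasV P 1 (k+1) \<and>
          prime \<bar>lucasV P 1 (k-1)\<bar> \<and> prime \<bar>lucasV P 1 (k+1)\<bar>))"
  using sigma2_solution_lucasV_even[OF _ _ _ eq big] sigma2_solution_lucasV_odd[OF _ _ _ eq big]
    sigma2_solution_lucasV_plus[OF _ _ _ eq big]
  by blast

end
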